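(* Let $n=m^2$ where $m>1$ is odd and squarefree. Then $C_{S(n)^*}=9$.
   Context: For a natural number $n$, $\mathbb Z_n=\mathbb Z/n\mathbb Z$, $S(n)=\{x^2:x\in\mathbb Z_n\}$, $S(n)^*=S(n)\setminus\{0\}$. For $A\subseteq\mathbb Z_n$, a sequence $(y_1,\dots,y_t)$ ($t\ge1$) in $\mathbb Z_n$ is an $A$-weighted zero-sum sequence if there exist $a_1,\dots,a_t\in A$ with $\sum a_iy_i=0$. $C_A(n)$ is the least positive integer $t$ such that every sequence of length $t$ in $\mathbb Z_n$ has a nonempty subsequence of consecutive terms that is an $A$-weighted zero-sum sequence; $C_{S(n)^*}=C_{S(n)^*}(n)$. *)

theory Defs
  imports "HOL-Computational_Algebra.Squarefree"
begin

text \<open>Z_n is modelled by the residues {0..<n} of int, arithmetic taken mod n.\<close>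

definition Zn :: "nat \<Rightarrow> int set" where
  "Zn n = {0..<int n}"

definition Sq :: "nat \<Rightarrow> int set" where
  "Sq n = {(x^2) mod int n | x. x \<in> Zn n}"

definition SqStar :: "nat \<Rightarrow> int set" where
  "SqStar n = Sq n - {0}"

definition weighted_zero_sum :: "nat \<Rightarrow> int set \<Rightarrow> int list \<Rightarrow> bool" where
  "weighted_zero_sum n A ys \<longleftrightarrow> ys \<noteq> [] \<and>
     (\<exists>as. length as = length ys \<and> set as \<subseteq> A \<and>
        (\<Sum>i<length ys. as ! i * ys ! i) mod int n = 0)"

definition has_consec_wzs :: "nat \<Rightarrow> int set \<Rightarrow> int list \<Rightarrow> bool" where
  "has_consec_wzs n A ys \<longleftrightarrow>
     (\<exists>i j. i < j \<and> j \<le> length ys \<and> weighted_zero_sum n A (take (j - i) (drop i ys)))"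

definition C_const :: "int set \<Rightarrow> nat \<Rightarrow> nat" where
  "C_const A n = (LEAST t. t > 0 \<and>
     (\<forall>ys. length ys = t \<and> set ys \<subseteq> Zn n \<longrightarrow> has_consec_wzs n A ys))"

end

theory Submission
  imports Defs "HOL-Number_Theory.Number_Theory"
begin

text \<open>Upper bound: take an odd prime \<open>p\<close> dividing \<open>m = r p\<close>. A weight \<open>(r x)\<^sup>2\<close> with \<open>x\<close> prime to \<open>p\<close>
  is a nonzero square modulo \<open>m\<^sup>2\<close>, so it suffices to find consecutive terms \<open>y\<^sub>q\<close> and \<open>p\<close>-units \<open>x\<^sub>q\<close>
  with \<open>\<Sum> x\<^sub>q\<^sup>2 y\<^sub>q \<equiv> 0 (mod p\<^sup>2)\<close>. Among nine terms, either one is divisible by \<open>p\<^sup>2\<close>, or there are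
  three successive \<open>p\<close>-units separated only by multiples of \<open>p\<close>, or three adjacent terms divisible
  by \<open>p\<close> exactly once. In the last two cases one of the diagonal forms \<open>a x\<^sup>2 + b y\<^sup>2\<close>,
  \<open>b y\<^sup>2 + c z\<^sup>2\<close>, \<open>a x\<^sup>2 + b y\<^sup>2 + c z\<^sup>2\<close> has a zero in units modulo \<open>p\<close>, which is lifted to \<open>p\<^sup>2\<close>
  by Hensel's lemma in the unit case.

  Lower bound: choose \<open>c\<close> such that \<open>-c\<close> is a nonresidue modulo every prime divisor of \<open>m\<close>. Then
  \<open>m | x\<^sup>2 + c y\<^sup>2\<close> forces \<open>m | x\<close> and \<open>m | y\<close>, since \<open>m\<close> is squarefree, and this rules out every
  weighted zero-sum block of \<open>(m, mc, 1, m, mc, c, m, mc)\<close>: modulo \<open>m\<close> only the terms \<open>1\<close> and \<open>c\<close>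
  survive, and a block avoiding them lies inside some \<open>(m, mc)\<close>.\<close>

section \<open>Quadratic residues and diagonal quadratic forms\<close>

lemma QuadRes_cong:
  assumes "[a = b] (mod p)"
  shows "QuadRes p a \<longleftrightarrow> QuadRes p b"
  using assms unfolding QuadRes_def by (meson cong_sym cong_trans)

lemma not_QuadRes_imp_not_dvd:
  assumes "\<not> QuadRes p a"
  shows "\<not> p dvd a"
  using assms unfolding QuadRes_def by (metis cong_0_iff cong_sym zero_power2)

lemma not_dvd_of_square_cong:
  fixes p s a :: int
  assumes "[s^2 = a] (mod p)" "\<not> p dvd a"
  shows "\<not> p dvd s"
proof
  assume "p dvd s"
  then have "p dvd s^2" by (simp add: power2_eq_square)
  then show False using assms cong_dvd_iff by blast
qed

lemma inverse_mod_prime: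
  fixes p a :: int
  assumes "prime p" "\<not> p dvd a"
  obtains v where "[a * v = 1] (mod p)"
  using cong_solve_coprime_int prime_imp_coprime[OF assms] by (auto simp: coprime_commute)

lemma QuadRes_mult_nonres:
  fixes p a b :: int
  assumes p: "prime p" "p > 2" and "\<not> QuadRes p a" "\<not> QuadRes p b"
  shows "QuadRes p (a * b)"
proof (rule ccontr)
  assume nab: "\<not> QuadRes p (a * b)"
  define k where "k = (nat p - 1) div 2"
  have euler: "[Legendre x p = x ^ k] (mod p)" for x
  proof -
    have "prime (nat p)" "2 < nat p" using p by simp_all
    from euler_criterion[OF this, of x] show ?thesis
      using p unfolding k_def by simp
  qed
  have pow: "[x ^ k = -1] (mod p)" if "\<not> QuadRes p x" for x
  proof -
    have "Legendre x p = -1"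
      using that not_QuadRes_imp_not_dvd[OF that] by (simp add: Legendre_def cong_0_iff)
    then show ?thesis using cong_sym[OF euler[of x]] by simp
  qed
  have "[(a * b) ^ k = (-1) * (-1)] (mod p)"
    unfolding power_mult_distrib using assms by (intro cong_mult pow)
  then have "[(-1) * (-1) = -1] (mod p)"
    using pow[OF nab] by (metis cong_sym cong_trans)
  then have "p dvd 2" by (simp add: cong_iff_dvd_diff)
  then have "p \<le> 2" by (rule zdvd_imp_le) simp
  with p show False by simp
qed

lemma QuadRes_cancel_square:
  fixes p a b :: int
  assumes "prime p" "\<not> p dvd b" "QuadRes p (a * b^2)"
  shows "QuadRes p a"
proof -
  obtain t where t: "[t^2 = a * b^2] (mod p)" using assms(3) unfolding QuadRes_def by blast
  obtain v where v: "[b * v = 1] (mod p)" using inverse_mod_prime assms(1,2) .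
  have "[(t * v)^2 = a * b^2 * v^2] (mod p)"
    unfolding power_mult_distrib using t by (rule cong_mult) (rule cong_refl)
  also have "a * b^2 * v^2 = a * (b * v)^2" by (simp add: power_mult_distrib)
  also have "[a * (b * v)^2 = a * 1^2] (mod p)" using v by (intro cong_mult cong_pow cong_refl)
  finally show ?thesis unfolding QuadRes_def by auto
qed

lemma exists_nonres:
  fixes p :: int
  assumes "prime p" "p > 2"
  shows "\<exists>g. \<not> QuadRes p g"
proof (rule ccontr)
  assume all_res: "\<not> (\<exists>g. \<not> QuadRes p g)"
  define h where "h = (p - 1) div 2"
  have p_eq: "p = 2 * h + 1" using assms prime_odd_int unfolding h_def by (auto elim: oddE)
  have "{0..<p} \<subseteq> (\<lambda>x. x^2 mod p) ` {0..h}"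
  proof
    fix r assume r: "r \<in> {0..<p}"
    obtain y where "[y^2 = r] (mod p)" using all_res unfolding QuadRes_def by blast
    then have r_eq: "r = (y mod p)^2 mod p" using r by (simp add: cong_def power_mod)
    define z where "z = y mod p"
    have z: "0 \<le> z" "z < p" using assms unfolding z_def by simp_all
    show "r \<in> (\<lambda>x. x^2 mod p) ` {0..h}"
    proof (cases "z \<le> h")
      case True
      then show ?thesis using r_eq z unfolding z_def by force
    next
      case False
      have "(p - z)^2 = z^2 + p * (p - 2 * z)" by (simp add: algebra_simps power2_eq_square)
      then have "r = (p - z)^2 mod p" using r_eq unfolding z_def by simp
      moreover have "p - z \<in> {0..h}" using False z p_eq by simp
      ultimately show ?thesis by blast
    qed
  qed
  then have "card {0..<p} \<le> card {0..h}" using card_image_le card_mono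
    by (metis finite_atLeastAtMost_int finite_imageI le_trans)
  then show False using p_eq assms by simp
qed

lemma exists_nonres_successor_of_res:
  fixes p :: int
  assumes "prime p" "p > 2"
  shows "\<exists>k. \<not> QuadRes p k \<and> QuadRes p (k - 1) \<and> \<not> p dvd k - 1"
proof -
  obtain g where g: "\<not> QuadRes p g" using exists_nonres[OF assms] by blast
  have "[int (nat (g mod p)) = g] (mod p)" using assms by (simp add: cong_def)
  then have ex: "\<not> QuadRes p (int (nat (g mod p)))" using g QuadRes_cong by blast
  define K where "K = (LEAST k. \<not> QuadRes p (int k))"
  have K: "\<not> QuadRes p (int K)" unfolding K_def using ex by (rule LeastI)
  have "K \<le> nat (g mod p)" unfolding K_def using ex by (rule Least_le)
  then have "int K \<le> g mod p" using assms by (simp add: le_nat_iff)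
  then have K_lt: "int K < p" using assms by (meson pos_mod_bound prime_gt_0_int order_le_less_trans)
  have res: "QuadRes p (int k)" if "k < K" for k
    using not_less_Least[of k "\<lambda>k. \<not> QuadRes p (int k)"] that unfolding K_def by blast
  have "QuadRes p 0" "QuadRes p 1" unfolding QuadRes_def by (auto intro: exI[of _ 0] exI[of _ 1])
  then have "K \<noteq> 0" "K \<noteq> 1" using K by (metis of_nat_0, metis of_nat_1)
  then have "K \<ge> 2" by linarith
  then have "QuadRes p (int K - 1)" using res[of "K - 1"] by simp
  moreover have "\<not> p dvd int K - 1" using \<open>K \<ge> 2\<close> K_lt zdvd_imp_le by fastforce
  ultimately show ?thesis using K by blast
qed

lemma isotropic_pair:
  fixes p a b :: int
  assumes "prime p" "\<not> p dvd a" "\<not> p dvd b" "QuadRes p (-(a * b))"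
  shows "\<exists>x y. \<not> p dvd x \<and> \<not> p dvd y \<and> p dvd a * x^2 + b * y^2"
proof -
  obtain s where s: "[s^2 = -(a * b)] (mod p)" using assms(4) unfolding QuadRes_def by blast
  have "\<not> p dvd -(a * b)" using assms(1-3) by (simp add: prime_dvd_mult_iff)
  then have "\<not> p dvd s" using s by (rule not_dvd_of_square_cong[rotated])
  moreover have "p dvd a * (s^2 - (-(a * b)))" using s by (simp add: cong_iff_dvd_diff)
  then have "p dvd a * s^2 + b * a^2" by (simp add: algebra_simps power2_eq_square)
  ultimately show ?thesis using assms(2) by blast
qed

text \<open>The nonresidues \<open>-ab\<close> and \<open>-bc\<close> multiply to a square, hence \<open>ac \<equiv> s\<^sup>2\<close>. With a nonresidue \<open>K\<close> such that \<open>K - 1 \<equiv> A\<^sup>2\<close> and with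
  \<open>w\<^sup>2 \<equiv> -Kab\<close>, one has \<open>a (Aws)\<^sup>2 + b (Ksa)\<^sup>2 + c (wa)\<^sup>2 \<equiv> a K s\<^sup>2 (w\<^sup>2 + Kab) \<equiv> 0 (mod p)\<close>.\<close>

lemma ternary_isotropic_of_nonres:
  fixes p a b c :: int
  assumes p: "prime p" "p > 2" and units: "\<not> p dvd a" "\<not> p dvd b" "\<not> p dvd c"
    and nab: "\<not> QuadRes p (-(a * b))" and nbc: "\<not> QuadRes p (-(b * c))"
  shows "\<exists>x y z. \<not> p dvd x \<and> \<not> p dvd y \<and> \<not> p dvd z \<and> p dvd a * x^2 + b * y^2 + c * z^2"
proof -
  have "QuadRes p ((a * c) * b^2)"
    using QuadRes_mult_nonres[OF p nab nbc] by (simp add: algebra_simps power2_eq_square)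
  then have "QuadRes p (a * c)" using QuadRes_cancel_square p(1) units(2) by blast
  then obtain s where s: "[s^2 = a * c] (mod p)" unfolding QuadRes_def by blast
  obtain K where K: "\<not> QuadRes p K" "QuadRes p (K - 1)" "\<not> p dvd K - 1"
    using exists_nonres_successor_of_res[OF p] by blast
  then obtain A where A: "[A^2 = K - 1] (mod p)" unfolding QuadRes_def by blast
  have "QuadRes p (K * (-(a * b)))" using QuadRes_mult_nonres[OF p K(1) nab] .
  then obtain w where w: "[w^2 = K * (-(a * b))] (mod p)" unfolding QuadRes_def by blast
  have nK: "\<not> p dvd K" using not_QuadRes_imp_not_dvd[OF K(1)] .
  have ns: "\<not> p dvd s" using not_dvd_of_square_cong[OF s] p(1) units by (simp add: prime_dvd_mult_iff)
  have nw: "\<not> p dvd w"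
    using not_dvd_of_square_cong[OF w] p(1) units nK by (simp add: prime_dvd_mult_iff)
  have nA: "\<not> p dvd A" using not_dvd_of_square_cong[OF A K(3)] .
  define X Y Z where "X = A * w * s" and "Y = K * s * a" and "Z = w * a"
  have "a * (a * X^2 + b * Y^2 + c * Z^2) =
      K * s^2 * a^2 * (w^2 - K * (-(a * b))) + w^2 * s^2 * a^2 * (A^2 - (K - 1))
      - w^2 * a^2 * (s^2 - a * c)"
    unfolding X_def Y_def Z_def by (simp add: algebra_simps power2_eq_square)
  also have "p dvd \<dots>"
  proof -
    have "p dvd w^2 - K * (-(a * b))" "p dvd A^2 - (K - 1)" "p dvd s^2 - a * c"
      using s w A by (simp_all add: cong_iff_dvd_diff)
    then show ?thesis by simp
  qed
  finally have "p dvd a * X^2 + b * Y^2 + c * Z^2" using p(1) units(1) by (simp add: prime_dvd_mult_iff)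
  moreover have "\<not> p dvd X" "\<not> p dvd Y" "\<not> p dvd Z"
    unfolding X_def Y_def Z_def using p(1) units nA nw ns nK by (simp_all add: prime_dvd_mult_iff)
  ultimately show ?thesis by blast
qed

lemma diagonal_ternary_isotropic:
  fixes p a b c :: int
  assumes p: "prime p" "p > 2" and units: "\<not> p dvd a" "\<not> p dvd b" "\<not> p dvd c"
  shows "(\<exists>x y. \<not> p dvd x \<and> \<not> p dvd y \<and> p dvd a * x^2 + b * y^2) \<or>
         (\<exists>y z. \<not> p dvd y \<and> \<not> p dvd z \<and> p dvd b * y^2 + c * z^2) \<or>
         (\<exists>x y z. \<not> p dvd x \<and> \<not> p dvd y \<and> \<not> p dvd z \<and> p dvd a * x^2 + b * y^2 + c * z^2)"
proof -
  consider (ab) "QuadRes p (-(a * b))" | (bc) "QuadRes p (-(b * c))"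
    | (neither) "\<not> QuadRes p (-(a * b))" "\<not> QuadRes p (-(b * c))" by blast
  then show ?thesis
  proof cases
    case ab
    then show ?thesis using isotropic_pair[OF p(1) units(1,2)] by (intro disjI1)
  next
    case bc
    then show ?thesis using isotropic_pair[OF p(1) units(2,3)] by (intro disjI2 disjI1)
  next
    case neither
    show ?thesis using ternary_isotropic_of_nonres[OF p units neither] by (intro disjI2)
  qed
qed

lemma nonres_neg_anisotropic:
  fixes p c x y :: int
  assumes "prime p" "\<not> QuadRes p (-c)" "p dvd x^2 + c * y^2"
  shows "p dvd x \<and> p dvd y"
proof -
  have y: "p dvd y"
  proof (rule ccontr)
    assume "\<not> p dvd y"
    have "[x^2 = -c * y^2] (mod p)" using assms(3) by (simp add: cong_iff_dvd_diff)
    then have "QuadRes p (-c * y^2)" unfolding QuadRes_def by blast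
    then show False using QuadRes_cancel_square assms(1,2) \<open>\<not> p dvd y\<close> by blast
  qed
  then have "p dvd c * y^2" by (simp add: power2_eq_square)
  then have "p dvd x^2" using assms(3) by (simp add: dvd_add_left_iff)
  then show ?thesis using y assms(1) prime_dvd_power_int by blast
qed

lemma squarefree_of_nat_int:
  assumes "squarefree m"
  shows "squarefree (int m)"
proof (rule squarefreeI)
  fix x :: int
  assume "x^2 dvd int m"
  then have "int (nat \<bar>x\<bar> ^ 2) dvd int m" by simp
  then have "nat \<bar>x\<bar> ^ 2 dvd m" by (simp only: of_nat_dvd_iff)
  then have "nat \<bar>x\<bar> dvd 1" using assms squarefreeD by blast
  then show "x dvd 1" by simp
qed

lemma squarefree_dvdI:
  fixes M x :: "'a :: factorial_semiring"
  assumes "squarefree M" and "\<And>p. prime p \<Longrightarrow> p dvd M \<Longrightarrow> p dvd x"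
  shows "M dvd x"
proof (cases "x = 0")
  case False
  have "M \<noteq> 0" using assms(1) by auto
  show ?thesis
  proof (rule multiplicity_le_imp_dvd[OF \<open>M \<noteq> 0\<close>])
    fix p :: 'a assume p: "prime p"
    show "multiplicity p M \<le> multiplicity p x"
    proof (cases "p dvd M")
      case True
      then have "multiplicity p M \<le> 1"
        using assms(1) p squarefree_factorial_semiring''[OF \<open>M \<noteq> 0\<close>] by blast
      moreover have "0 < multiplicity p x"
        using assms(2)[OF p True] p False by (simp add: prime_multiplicity_gt_zero_iff)
      ultimately show ?thesis by linarith
    qed (simp add: not_dvd_imp_multiplicity_0)
  qed
qed simp

lemma squarefree_nonres_anisotropic:
  fixes M c x y :: int
  assumes "squarefree M" and nonres: "\<And>p. prime p \<Longrightarrow> p dvd M \<Longrightarrow> \<not> QuadRes p (-c)"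
    and "M dvd x^2 + c * y^2"
  shows "M dvd x \<and> M dvd y"
proof -
  have "p dvd x \<and> p dvd y" if "prime p" "p dvd M" for p
    using nonres_neg_anisotropic[OF that(1) nonres[OF that]] dvd_trans[OF that(2) assms(3)] .
  then show ?thesis using squarefree_dvdI[OF assms(1)] by blast
qed

lemma prime_divisor_of_odd_gt_2:
  fixes p k :: int
  assumes "prime p" "p dvd k" "odd k"
  shows "p > 2"
proof -
  have "p \<noteq> 2" using assms(2,3) by auto
  then show ?thesis using prime_ge_2_int[OF assms(1)] by simp
qed

section \<open>Squares modulo \<open>m\<^sup>2\<close> and weighted zero-sum blocks\<close>

lemma Sq_eq_image:
  assumes "n > 0"
  shows "Sq n = range (\<lambda>x. x^2 mod int n)"
proof -
  have "x^2 mod int n \<in> Sq n" for x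
  proof -
    have "x mod int n \<in> Zn n" using assms unfolding Zn_def by simp
    moreover have "(x mod int n)^2 mod int n = x^2 mod int n" by (simp add: power_mod)
    ultimately show ?thesis unfolding Sq_def mem_Collect_eq by (intro exI[of _ "x mod int n"]) simp
  qed
  then show ?thesis unfolding Sq_def by blast
qed

lemma SqStar_iff:
  assumes "n > 0"
  shows "a \<in> SqStar n \<longleftrightarrow> (\<exists>x. a = x^2 mod int n \<and> \<not> int n dvd x^2)"
  unfolding SqStar_def Sq_eq_image[OF assms] by (auto simp: dvd_eq_mod_eq_0)

lemma sum_take_drop_nth:
  assumes "j \<le> length ys"
  shows "(\<Sum>l<j - i. f (i + l) * take (j - i) (drop i ys) ! l) = (\<Sum>q = i..<j. f q * ys ! q)"
proof -
  have "(\<Sum>l<j - i. f (i + l) * take (j - i) (drop i ys) ! l) = (\<Sum>l<j - i. f (i + l) * ys ! (i + l))"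
    using assms by (intro sum.cong) auto
  also have "\<dots> = (\<Sum>q = i..<j. f q * ys ! q)"
    by (simp add: sum.atLeastLessThan_shift_0[of _ i j] lessThan_atLeast0 comp_def)
  finally show ?thesis .
qed

definition square_zero_block :: "int \<Rightarrow> int list \<Rightarrow> nat \<Rightarrow> nat \<Rightarrow> bool" where
  "square_zero_block p ys i j \<longleftrightarrow> i < j \<and> j \<le> length ys \<and>
     (\<exists>x. (\<forall>q\<in>{i..<j}. \<not> p dvd x q) \<and> p^2 dvd (\<Sum>q = i..<j. x q^2 * ys ! q))"

lemma SqStar_cofactor_square:
  fixes m n :: nat and p r x :: int
  assumes n: "n = m^2" and "m > 0" and "prime p" "int m = r * p" and "\<not> p dvd x"
  shows "(r * x)^2 mod int n \<in> SqStar n"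
proof -
  have "\<not> int n dvd (r * x)^2"
  proof
    assume "int n dvd (r * x)^2"
    moreover have "r \<noteq> 0" using assms(2,4) by auto
    ultimately have "p^2 dvd x^2" using assms(4) n by (simp add: power_mult_distrib)
    then have "p dvd x" using assms(3) by (metis dvd_mult_left power2_eq_square prime_dvd_mult_eq_int)
    then show False using assms(5) by simp
  qed
  then show ?thesis using assms(2) n by (auto simp: SqStar_iff)
qed

text \<open>With \<open>m = r p\<close>, the weights \<open>(r x\<^sub>q)\<^sup>2\<close> multiply the block sum by \<open>r\<^sup>2\<close>, turning divisibility
  by \<open>p\<^sup>2\<close> into divisibility by \<open>m\<^sup>2\<close>.\<close>

lemma has_consec_wzs_SqStarI:
  fixes m n :: nat and p :: int
  assumes n: "n = m^2" and "m > 0" and p: "prime p" "p dvd int m"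
    and "square_zero_block p ys i j"
  shows "has_consec_wzs n (SqStar n) ys"
proof -
  obtain x where ij: "i < j" "j \<le> length ys" and units: "\<forall>q\<in>{i..<j}. \<not> p dvd x q"
    and zero: "p^2 dvd (\<Sum>q = i..<j. x q^2 * ys ! q)"
    using assms(5) unfolding square_zero_block_def by blast
  obtain r where r: "int m = r * p" using p(2) by (metis dvd_def mult.commute)
  have n_eq: "int n = r^2 * p^2" using n r by (simp add: power_mult_distrib)
  define blk where "blk = take (j - i) (drop i ys)"
  define ws where "ws = map (\<lambda>l. (r * x (i + l))^2 mod int n) [0..<j - i]"
  have len: "length blk = j - i" "length ws = j - i" using ij unfolding blk_def ws_def by simp_all
  have "set ws \<subseteq> SqStar n"
    using units SqStar_cofactor_square[OF n \<open>m > 0\<close> p(1) r] unfolding ws_def by auto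
  moreover have "(\<Sum>l<length blk. ws ! l * blk ! l) mod int n = 0"
  proof -
    have "[\<Sum>l<length blk. ws ! l * blk ! l = \<Sum>l<j - i. (r * x (i + l))^2 * blk ! l] (mod int n)"
      unfolding len(1) ws_def by (intro cong_sum cong_mult) (simp_all add: cong_def)
    also have "(\<Sum>l<j - i. (r * x (i + l))^2 * blk ! l) = (\<Sum>q = i..<j. (r * x q)^2 * ys ! q)"
      unfolding blk_def by (rule sum_take_drop_nth[OF ij(2), where f = "\<lambda>q. (r * x q)^2"])
    also have "\<dots> = r^2 * (\<Sum>q = i..<j. x q^2 * ys ! q)"
      by (simp add: sum_distrib_left power_mult_distrib mult.assoc)
    also have "[\<dots> = 0] (mod int n)"
      using zero unfolding n_eq cong_0_iff by (simp add: mult_dvd_mono)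
    finally show ?thesis by (simp add: cong_0_iff)
  qed
  ultimately have "weighted_zero_sum n (SqStar n) blk"
    unfolding weighted_zero_sum_def using len ij by auto
  then show ?thesis unfolding has_consec_wzs_def blk_def using ij by blast
qed

lemma has_consec_wzs_SqStarE:
  fixes m n :: nat
  assumes n: "n = m^2" and "m > 0" and "has_consec_wzs n (SqStar n) ys"
  obtains i j and x :: "nat \<Rightarrow> int" where "i < j" "j \<le> length ys"
    "\<forall>q\<in>{i..<j}. \<not> int m dvd x q" "int n dvd (\<Sum>q = i..<j. x q^2 * ys ! q)"
proof -
  obtain i j where ij: "i < j" "j \<le> length ys"
    and w: "weighted_zero_sum n (SqStar n) (take (j - i) (drop i ys))"
    using assms(3) unfolding has_consec_wzs_def by blast
  define blk where "blk = take (j - i) (drop i ys)"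
  have len_blk: "length blk = j - i" using ij unfolding blk_def by simp
  from w have "\<exists>ws. length ws = j - i \<and> set ws \<subseteq> SqStar n \<and> (\<Sum>l<j - i. ws ! l * blk ! l) mod int n = 0"
    unfolding weighted_zero_sum_def blk_def[symmetric] len_blk by (rule conjunct2)
  then obtain ws where len: "length ws = j - i" and ws: "set ws \<subseteq> SqStar n"
    and zero: "(\<Sum>l<j - i. ws ! l * blk ! l) mod int n = 0" by auto
  have "\<forall>l\<in>{..<j - i}. \<exists>y. ws ! l = y^2 mod int n \<and> \<not> int n dvd y^2"
  proof
    fix l assume "l \<in> {..<j - i}"
    then have "ws ! l \<in> SqStar n" using ws len by (auto intro: nth_mem)
    then show "\<exists>y. ws ! l = y^2 mod int n \<and> \<not> int n dvd y^2" using SqStar_iff \<open>m > 0\<close> n by simp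
  qed
  from bchoice[OF this] obtain y
    where y: "\<And>l. l < j - i \<Longrightarrow> ws ! l = y l ^ 2 mod int n \<and> \<not> int n dvd y l ^ 2" by blast
  define x where "x q = y (q - i)" for q
  have "\<not> int m dvd x q" if "q \<in> {i..<j}" for q
  proof
    assume "int m dvd x q"
    then have "int n dvd x q ^ 2" using n by (simp add: power_mult_distrib mult_dvd_mono power2_eq_square)
    moreover have "q - i < j - i" using that by auto
    ultimately show False using y[of "q - i"] unfolding x_def by blast
  qed
  moreover have "int n dvd (\<Sum>q = i..<j. x q^2 * ys ! q)"
  proof -
    have "[\<Sum>q = i..<j. x q^2 * ys ! q = \<Sum>l<j - i. ws ! l * blk ! l] (mod int n)"
      unfolding sum_take_drop_nth[OF ij(2), symmetric] x_def blk_def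
      by (intro cong_sum cong_mult) (simp_all add: y cong_def)
    then show ?thesis using zero by (simp add: cong_def mod_eq_0_iff_dvd)
  qed
  ultimately show ?thesis using that ij by blast
qed

lemma has_consec_wzs_take:
  assumes "has_consec_wzs n A (take t ys)"
  shows "has_consec_wzs n A ys"
proof -
  obtain i j where ij: "i < j" "j \<le> length (take t ys)"
    and "weighted_zero_sum n A (take (j - i) (drop i (take t ys)))"
    using assms unfolding has_consec_wzs_def by blast
  moreover have "j - i \<le> t - i" using ij by (simp add: diff_le_mono)
  then have "take (j - i) (drop i (take t ys)) = take (j - i) (drop i ys)"
    by (simp add: drop_take min_def)
  ultimately show ?thesis unfolding has_consec_wzs_def by (intro exI[of _ i] exI[of _ j]) auto
qed

section \<open>Every sequence of length nine has a zero-sum block\<close>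

lemma three_least_elements:
  fixes U :: "'a :: linorder set"
  assumes "finite U" "card U \<ge> 3"
  obtains i j k where "i < j" "j < k" "{i, j, k} \<subseteq> U" "\<forall>q\<in>U. q \<le> k \<longrightarrow> q \<in> {i, j, k}"
proof -
  define L where "L = sorted_list_of_set U"
  have sorted: "sorted_wrt (<) L" and set_L: "set L = U" and len: "length L \<ge> 3"
    using assms unfolding L_def by simp_all
  have "L ! 0 < L ! 1" "L ! 1 < L ! 2" using sorted len by (simp_all add: sorted_wrt_nth_less)
  moreover have "{L ! 0, L ! 1, L ! 2} \<subseteq> U" using len unfolding set_L[symmetric] by (auto intro!: nth_mem)
  moreover have "\<forall>q\<in>U. q \<le> L ! 2 \<longrightarrow> q \<in> {L ! 0, L ! 1, L ! 2}"
  proof (intro ballI impI)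
    fix q assume q: "q \<in> U" "q \<le> L ! 2"
    have "q \<in> set L" using q(1) set_L by simp
    then obtain r where r: "r < length L" "q = L ! r" by (auto simp: in_set_conv_nth)
    have "\<not> 2 < r"
    proof
      assume "2 < r"
      then have "L ! 2 < L ! r" using sorted_wrt_nth_less[OF sorted] r(1) by blast
      then show False using q(2) r(2) by simp
    qed
    then have "r = 0 \<or> r = 1 \<or> r = 2" by linarith
    then show "q \<in> {L ! 0, L ! 1, L ! 2}" using r by auto
  qed
  ultimately show ?thesis by (rule that)
qed

lemma exists_gap_of_three:
  fixes U :: "nat set"
  assumes "finite U" "card U < 3"
  shows "\<exists>t\<in>{0, 3, 6}. {t..<t + 3} \<inter> U = {}"
proof (rule ccontr)
  assume "\<not> ?thesis"
  then obtain u0 u1 u2 where "u0 \<in> U" "u0 < 3" "u1 \<in> U" "3 \<le> u1" "u1 < 6" "u2 \<in> U" "6 \<le> u2"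
    by (auto simp: numeral_eq_Suc)
  then have "card {u0, u1, u2} = 3" "{u0, u1, u2} \<subseteq> U" by auto
  then have "3 \<le> card U" using card_mono[OF assms(1)] by metis
  then show False using assms(2) by simp
qed

lemma lift_weighted_sum_mod_square:
  fixes p :: int and x y :: "nat \<Rightarrow> int"
  assumes p: "prime p" "p > 2" and "finite B" "i \<in> B" "\<not> p dvd y i"
    and units: "\<forall>q\<in>B. \<not> p dvd x q" and zero: "p dvd (\<Sum>q\<in>B. x q^2 * y q)"
  shows "\<exists>x'. (\<forall>q\<in>B. \<not> p dvd x' q) \<and> p^2 dvd (\<Sum>q\<in>B. x' q^2 * y q)"
proof -
  obtain T where T: "(\<Sum>q\<in>B. x q^2 * y q) = p * T" using zero by (elim dvdE)
  have "\<not> p dvd 2" using p zdvd_imp_le[of p 2] by auto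
  then have "\<not> p dvd 2 * x i * y i" using p(1) units assms(4,5) by (simp add: prime_dvd_mult_iff)
  then obtain v where v: "[2 * x i * y i * v = 1] (mod p)" using inverse_mod_prime p(1) by blast
  define x' where "x' = x(i := x i - p * T * v)"
  have "(\<Sum>q\<in>B. x' q^2 * y q) = x' i^2 * y i + (\<Sum>q\<in>B - {i}. x q^2 * y q)"
    using assms(3,4) unfolding x'_def by (simp add: sum.remove)
  also have "\<dots> = (\<Sum>q\<in>B. x q^2 * y q) + (x' i^2 - x i^2) * y i"
    using assms(3,4) by (simp add: sum.remove algebra_simps)
  also have "\<dots> = p * T * (1 - 2 * x i * y i * v) + p^2 * (T * v)^2 * y i"
    unfolding T x'_def by (simp add: algebra_simps power2_eq_square)
  also have "p^2 dvd \<dots>"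
  proof -
    have "p dvd 1 - 2 * x i * y i * v" using v by (simp add: cong_iff_dvd_diff dvd_diff_commute)
    then show ?thesis by (simp add: power2_eq_square mult_dvd_mono)
  qed
  finally have "p^2 dvd (\<Sum>q\<in>B. x' q^2 * y q)" .
  moreover have "\<not> p dvd x' q" if "q \<in> B" for q
  proof
    assume "p dvd x' q"
    show False
    proof (cases "q = i")
      case True
      then have "p dvd x i - p * T * v" using \<open>p dvd x' q\<close> unfolding x'_def by simp
      moreover have "p dvd p * T * v" by simp
      ultimately have "p dvd (x i - p * T * v) + p * T * v" by (rule dvd_add)
      then show False using units assms(4) by simp
    qed (use \<open>p dvd x' q\<close> units that x'_def in auto)
  qed
  ultimately show ?thesis by blast
qed

lemma square_zero_block_single:
  assumes "prime p" "q < length ys" "p^2 dvd ys ! q"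
  shows "square_zero_block p ys q (Suc q)"
  unfolding square_zero_block_def using assms
  by (intro conjI exI[of _ "\<lambda>_. 1"]) (auto simp: prime_int_iff)

lemma square_zero_block_of_unit_solution:
  fixes p :: int and x :: "nat \<Rightarrow> int"
  assumes p: "prime p" "p > 2" and ij: "i < j" "j \<le> length ys"
    and S: "S \<subseteq> {i..<j}" "s \<in> S" "\<not> p dvd ys ! s"
    and rest: "\<forall>q\<in>{i..<j} - S. p dvd ys ! q"
    and x: "\<forall>q\<in>S. \<not> p dvd x q" "p dvd (\<Sum>q\<in>S. x q^2 * ys ! q)"
  shows "square_zero_block p ys i j"
proof -
  define x' where "x' q = (if q \<in> S then x q else 1)" for q
  have "(\<Sum>q = i..<j. x' q^2 * ys ! q) = (\<Sum>q\<in>{i..<j} - S. x' q^2 * ys ! q) + (\<Sum>q\<in>S. x' q^2 * ys ! q)"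
    using S(1) by (intro sum.subset_diff) simp_all
  also have "\<dots> = (\<Sum>q\<in>{i..<j} - S. ys ! q) + (\<Sum>q\<in>S. x q^2 * ys ! q)"
    unfolding x'_def by (intro arg_cong2[where f = "(+)"] sum.cong) auto
  also have "p dvd \<dots>" using x(2) rest by (intro dvd_add[OF dvd_sum]) auto
  finally have zero: "p dvd (\<Sum>q = i..<j. x' q^2 * ys ! q)" .
  have units: "\<forall>q\<in>{i..<j}. \<not> p dvd x' q" using x(1) p unfolding x'_def by (auto simp: prime_int_iff)
  have "s \<in> {i..<j}" using S by blast
  from lift_weighted_sum_mod_square[where y = "(!) ys", OF p finite_atLeastLessThan this S(3) units zero]
  show ?thesis using ij unfolding square_zero_block_def by blast
qed

lemma diagonal_ternary_isotropic_block:
  fixes p :: int and y :: "nat \<Rightarrow> int"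
  assumes p: "prime p" "p > 2" and ijk: "i < j" "j < k"
    and units: "\<not> p dvd y i" "\<not> p dvd y j" "\<not> p dvd y k"
  shows "\<exists>lo hi x. lo \<in> {i, j} \<and> hi \<in> {Suc j, Suc k} \<and> lo < hi \<and>
    (\<forall>q\<in>{lo..<hi} \<inter> {i, j, k}. \<not> p dvd x q) \<and> p dvd (\<Sum>q\<in>{lo..<hi} \<inter> {i, j, k}. x q^2 * y q)"
  using diagonal_ternary_isotropic[OF p units]
proof (elim disjE exE conjE)
  fix x1 x2 assume "\<not> p dvd x1" "\<not> p dvd x2" "p dvd y i * x1^2 + y j * x2^2"
  moreover have "{i..<Suc j} \<inter> {i, j, k} = {i, j}" using ijk by auto
  ultimately show ?thesis using ijk
    by (intro exI[of _ i] exI[of _ "Suc j"] exI[of _ "\<lambda>q. if q = i then x1 else x2"]) (auto simp: ac_simps)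
next
  fix x2 x3 assume "\<not> p dvd x2" "\<not> p dvd x3" "p dvd y j * x2^2 + y k * x3^2"
  moreover have "{j..<Suc k} \<inter> {i, j, k} = {j, k}" using ijk by auto
  ultimately show ?thesis using ijk
    by (intro exI[of _ j] exI[of _ "Suc k"] exI[of _ "\<lambda>q. if q = j then x2 else x3"]) (auto simp: ac_simps)
next
  fix x1 x2 x3
  assume "\<not> p dvd x1" "\<not> p dvd x2" "\<not> p dvd x3" "p dvd y i * x1^2 + y j * x2^2 + y k * x3^2"
  moreover have "{i..<Suc k} \<inter> {i, j, k} = {i, j, k}" using ijk by auto
  ultimately show ?thesis using ijk
    by (intro exI[of _ i] exI[of _ "Suc k"]
        exI[of _ "\<lambda>q. if q = i then x1 else if q = j then x2 else x3"]) (auto simp: ac_simps)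
qed

lemma square_zero_block_three_units:
  fixes p :: int
  assumes p: "prime p" "p > 2" and ijk: "i < j" "j < k" "k < length ys"
    and units: "\<not> p dvd ys ! i" "\<not> p dvd ys ! j" "\<not> p dvd ys ! k"
    and rest: "\<forall>q\<in>{i..k} - {i, j, k}. p dvd ys ! q"
  shows "\<exists>lo hi. square_zero_block p ys lo hi"
proof -
  obtain lo hi x where lo: "lo \<in> {i, j}" and hi: "hi \<in> {Suc j, Suc k}" "lo < hi"
    and x: "\<forall>q\<in>{lo..<hi} \<inter> {i, j, k}. \<not> p dvd x q"
      "p dvd (\<Sum>q\<in>{lo..<hi} \<inter> {i, j, k}. x q^2 * ys ! q)"
    using diagonal_ternary_isotropic_block[where y = "(!) ys", OF p ijk(1,2) units] by blast
  have "square_zero_block p ys lo hi"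
  proof (rule square_zero_block_of_unit_solution[OF p _ _ _ _ _ _ x])
    show "lo < hi" "hi \<le> length ys" using hi ijk by auto
    show "{lo..<hi} \<inter> {i, j, k} \<subseteq> {lo..<hi}" "lo \<in> {lo..<hi} \<inter> {i, j, k}" using lo hi by auto
    show "\<not> p dvd ys ! lo" using lo units by auto
    show "\<forall>q\<in>{lo..<hi} - {lo..<hi} \<inter> {i, j, k}. p dvd ys ! q" using rest lo hi ijk by auto
  qed
  then show ?thesis by blast
qed

lemma square_zero_block_three_exact:
  fixes p :: int
  assumes p: "prime p" "p > 2" and t: "t + 3 \<le> length ys"
    and exact: "\<forall>q\<in>{t..<t + 3}. p dvd ys ! q \<and> \<not> p^2 dvd ys ! q"
  shows "\<exists>lo hi. square_zero_block p ys lo hi"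
proof -
  define z where "z q = ys ! q div p" for q
  have ys_eq: "ys ! q = p * z q" if "q \<in> {t..<t + 3}" for q
    using exact that unfolding z_def by simp
  have "\<not> p dvd z q" if "q \<in> {t..<t + 3}" for q
  proof
    assume "p dvd z q"
    then have "p^2 dvd p * z q" by (simp add: power2_eq_square)
    moreover have "\<not> p^2 dvd ys ! q" using exact that by blast
    ultimately show False using ys_eq[OF that] by simp
  qed
  then have "\<not> p dvd z t" "\<not> p dvd z (t + 1)" "\<not> p dvd z (t + 2)" by auto
  then obtain lo hi x where lo: "lo \<in> {t, t + 1}" and hi: "hi \<in> {Suc (t + 1), Suc (t + 2)}" "lo < hi"
    and x: "\<forall>q\<in>{lo..<hi} \<inter> {t, t + 1, t + 2}. \<not> p dvd x q"
      "p dvd (\<Sum>q\<in>{lo..<hi} \<inter> {t, t + 1, t + 2}. x q^2 * z q)"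
    using diagonal_ternary_isotropic_block[OF p, of t "t + 1" "t + 2" z] by auto
  have block: "{lo..<hi} \<inter> {t, t + 1, t + 2} = {lo..<hi}" "{lo..<hi} \<subseteq> {t..<t + 3}"
    using lo hi by auto
  have "(\<Sum>q = lo..<hi. x q^2 * ys ! q) = p * (\<Sum>q = lo..<hi. x q^2 * z q)"
    using block(2) ys_eq by (auto simp: sum_distrib_left ac_simps intro!: sum.cong)
  then have "p^2 dvd (\<Sum>q = lo..<hi. x q^2 * ys ! q)"
    using x(2) unfolding block(1) by (simp add: power2_eq_square)
  then have "square_zero_block p ys lo hi"
    using x(1) hi t unfolding block(1) square_zero_block_def by auto
  then show ?thesis by blast
qed

lemma exists_square_zero_block:
  fixes p :: int
  assumes p: "prime p" "p > 2" and len: "length ys = 9"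
  shows "\<exists>i j. square_zero_block p ys i j"
proof (cases "\<exists>q<9. p^2 dvd ys ! q")
  case True
  then obtain q where "q < length ys" "p^2 dvd ys ! q" using len by auto
  then show ?thesis using square_zero_block_single[OF p(1)] by blast
next
  case no_square: False
  define U where "U = {q. q < 9 \<and> \<not> p dvd ys ! q}"
  have "finite U" unfolding U_def by simp
  show ?thesis
  proof (cases "card U \<ge> 3")
    case True
    then obtain i j k where ijk: "i < j" "j < k" "{i, j, k} \<subseteq> U" "\<forall>q\<in>U. q \<le> k \<longrightarrow> q \<in> {i, j, k}"
      using three_least_elements[OF \<open>finite U\<close>] by blast
    show ?thesis
    proof (rule square_zero_block_three_units[OF p ijk(1,2)])
      show "k < length ys" "\<not> p dvd ys ! i" "\<not> p dvd ys ! j" "\<not> p dvd ys ! k"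
        using ijk(3) len unfolding U_def by auto
      show "\<forall>q\<in>{i..k} - {i, j, k}. p dvd ys ! q"
      proof
        fix q assume q: "q \<in> {i..k} - {i, j, k}"
        then have "q < 9" using ijk(3) unfolding U_def by auto
        then show "p dvd ys ! q" using ijk(4) q unfolding U_def by auto
      qed
    qed
  next
    case False
    then obtain t where t: "t \<in> {0, 3, 6}" "{t..<t + 3} \<inter> U = {}"
      using exists_gap_of_three[OF \<open>finite U\<close>] by (meson not_le)
    show ?thesis
    proof (rule square_zero_block_three_exact[OF p])
      show "t + 3 \<le> length ys" using t(1) len by auto
      show "\<forall>q\<in>{t..<t + 3}. p dvd ys ! q \<and> \<not> p^2 dvd ys ! q"
        using t no_square unfolding U_def by auto
    qed
  qed
qed

lemma has_consec_wzs_of_length_9: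
  fixes m n :: nat
  assumes "n = m^2" "m > 1" "odd m" "length ys = 9"
  shows "has_consec_wzs n (SqStar n) ys"
proof -
  obtain p :: int where p: "prime p" "p dvd int m"
    using prime_divisor_exists[of "int m"] assms(2) by auto
  have "p > 2" using prime_divisor_of_odd_gt_2[OF p] assms(3) by simp
  then obtain i j where "square_zero_block p ys i j"
    using exists_square_zero_block[OF p(1) _ assms(4)] by blast
  then show ?thesis using has_consec_wzs_SqStarI[OF assms(1) _ p] assms(2) by simp
qed

section \<open>A sequence of length eight without zero-sum blocks\<close>

lemma sum_squares_supported_on_two:
  fixes x w :: "nat \<Rightarrow> int"
  assumes "finite B" "a \<noteq> b" "\<forall>q\<in>B - {a, b}. w q = 0"
  shows "(\<Sum>q\<in>B. x q^2 * w q) =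
    (if a \<in> B then x a else 0)^2 * w a + (if b \<in> B then x b else 0)^2 * w b"
proof -
  have "(\<Sum>q\<in>B. x q^2 * w q) = (\<Sum>q\<in>B \<inter> {a, b}. x q^2 * w q)"
    using assms by (intro sum.mono_neutral_right) auto
  also have "\<dots> = (if a \<in> B then x a else 0)^2 * w a + (if b \<in> B then x b else 0)^2 * w b"
    using assms(2) by (cases "a \<in> B"; cases "b \<in> B") (auto simp: Int_insert_right)
  finally show ?thesis .
qed

lemma two_point_sum_not_dvd:
  fixes M c :: int and x w :: "nat \<Rightarrow> int"
  assumes "squarefree M" "\<And>p. prime p \<Longrightarrow> p dvd M \<Longrightarrow> \<not> QuadRes p (-c)"
    and "finite B" "a \<noteq> b" "a \<in> B \<or> b \<in> B" "\<forall>q\<in>B. \<not> M dvd x q"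
    and "w a = 1" "w b = c" "\<forall>q\<in>B - {a, b}. w q = 0"
  shows "\<not> M dvd (\<Sum>q\<in>B. x q^2 * w q)"
proof
  assume "M dvd (\<Sum>q\<in>B. x q^2 * w q)"
  then have "M dvd (if a \<in> B then x a else 0)^2 + c * (if b \<in> B then x b else 0)^2"
    using sum_squares_supported_on_two[OF assms(3,4,9)] assms(7,8) by (simp add: ac_simps)
  then have "M dvd (if a \<in> B then x a else 0) \<and> M dvd (if b \<in> B then x b else 0)"
    using squarefree_nonres_anisotropic assms(1,2) by blast
  then show False using assms(5,6) by auto
qed

lemma exists_nonres_mod_prime_divisors:
  fixes m :: nat
  assumes "m > 0" "odd m"
  shows "\<exists>g. \<forall>p. prime p \<longrightarrow> p dvd int m \<longrightarrow> \<not> QuadRes p g"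
proof -
  define A where "A = {p :: int. prime p \<and> p dvd int m}"
  have odd_prime: "prime p \<and> p > 2" if "p \<in> A" for p
    using that prime_divisor_of_odd_gt_2[of p "int m"] assms(2) unfolding A_def by simp
  have "A \<subseteq> {0..int m}"
  proof
    fix p assume "p \<in> A"
    then have "0 < p" "p dvd int m" unfolding A_def by (auto simp: prime_gt_0_int)
    then show "p \<in> {0..int m}" using zdvd_imp_le[of p "int m"] assms(1) by simp
  qed
  then have "finite A" by (rule finite_subset) simp
  obtain g where g: "\<forall>p\<in>A. \<not> QuadRes p (g p)"
    using bchoice[of A "\<lambda>p g. \<not> QuadRes p g"] exists_nonres odd_prime by blast
  have "\<forall>p\<in>A. \<forall>q\<in>A. p \<noteq> q \<longrightarrow> coprime (nat p) (nat q)"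
  proof (intro ballI impI)
    fix p q assume pq: "p \<in> A" "q \<in> A" "p \<noteq> q"
    then have "prime (nat p)" "prime (nat q)" "nat p \<noteq> nat q"
      using odd_prime[OF pq(1)] odd_prime[OF pq(2)] by auto
    then show "coprime (nat p) (nat q)" by (rule primes_coprime)
  qed
  then obtain x where x: "\<forall>p\<in>A. [x = nat (g p mod p)] (mod nat p)"
    using chinese_remainder_nat[where m = nat and u = "\<lambda>p. nat (g p mod p)", OF \<open>finite A\<close>]
    by blast
  have "\<not> QuadRes p (int x)" if "prime p" "p dvd int m" for p
  proof -
    have pA: "p \<in> A" "p > 0" using that unfolding A_def by (auto simp: prime_gt_0_int)
    have "[x = nat (g p mod p)] (mod nat p)" using x pA(1) by blast
    then have "[int x = int (nat (g p mod p))] (mod int (nat p))" by (simp only: cong_int_iff)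
    then have "[int x = g p mod p] (mod p)" using pA(2) by simp
    then have "[int x = g p] (mod p)" by (simp add: cong_def)
    then show ?thesis using g pA(1) QuadRes_cong by blast
  qed
  then show ?thesis by blast
qed

lemma exists_nonres_neg_mod_prime_divisors:
  fixes m :: nat
  assumes "m > 1" "odd m"
  shows "\<exists>c. 0 < c \<and> c < int m \<and> (\<forall>p. prime p \<longrightarrow> p dvd int m \<longrightarrow> \<not> QuadRes p (-c))"
proof -
  obtain g where g: "\<forall>p. prime p \<longrightarrow> p dvd int m \<longrightarrow> \<not> QuadRes p g"
    using exists_nonres_mod_prime_divisors assms by fastforce
  define c where "c = (- g) mod int m"
  have nonres: "\<not> QuadRes p (-c)" if "prime p" "p dvd int m" for p
  proof -
    have "[c = - g] (mod p)" using that(2) unfolding c_def by (simp add: cong_def mod_mod_cancel)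
    then have "[-c = g] (mod p)" by (metis cong_minus_minus_iff minus_minus)
    then show ?thesis using g that QuadRes_cong by blast
  qed
  obtain p :: int where "prime p" "p dvd int m"
    using prime_divisor_exists[of "int m"] assms(1) by auto
  then have "\<not> p dvd -c" using nonres not_QuadRes_imp_not_dvd by blast
  then have "c \<noteq> 0" by auto
  moreover have "0 \<le> c" "c < int m" unfolding c_def using assms(1) by auto
  ultimately show ?thesis using nonres by (intro exI[of _ c]) auto
qed

definition lower_seq :: "int \<Rightarrow> int \<Rightarrow> int list" where
  "lower_seq M c = [M, M * c, 1, M, M * c, c, M, M * c]"

lemma lower_seq_nth:
  assumes "q < 8"
  shows "lower_seq M c ! q = M * (if q mod 3 = 0 then 1 else if q mod 3 = 1 then c else 0)
    + (if q = 2 then 1 else if q = 5 then c else 0)"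
proof -
  have "q = 0 \<or> q = 1 \<or> q = 2 \<or> q = 3 \<or> q = 4 \<or> q = 5 \<or> q = 6 \<or> q = 7" using assms by arith
  then show ?thesis by (elim disjE) (simp_all add: lower_seq_def)
qed

lemma lower_seq_no_consec_wzs:
  fixes m n :: nat and c :: int
  assumes n: "n = m^2" and m: "m > 0" "squarefree m"
    and nonres: "\<forall>p. prime p \<longrightarrow> p dvd int m \<longrightarrow> \<not> QuadRes p (-c)"
  shows "\<not> has_consec_wzs n (SqStar n) (lower_seq (int m) c)"
proof
  define M where "M = int m"
  define \<beta> where "\<beta> q = (if q mod 3 = 0 then 1 else if q mod 3 = 1 then c else 0)" for q :: nat
  define \<gamma> where "\<gamma> q = (if q = 2 then 1 else if q = 5 then c else 0)" for q :: nat
  have sqf: "squarefree M" using m(2) unfolding M_def by (rule squarefree_of_nat_int)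
  have nonresM: "\<And>p. prime p \<Longrightarrow> p dvd M \<Longrightarrow> \<not> QuadRes p (-c)" using nonres unfolding M_def by blast
  have "M \<noteq> 0" using m(1) unfolding M_def by simp
  assume "has_consec_wzs n (SqStar n) (lower_seq (int m) c)"
  then obtain i j x where ij: "i < j" "j \<le> length (lower_seq M c)"
    and units: "\<forall>q\<in>{i..<j}. \<not> M dvd x q" and zero: "int n dvd (\<Sum>q = i..<j. x q^2 * lower_seq M c ! q)"
    unfolding M_def by (rule has_consec_wzs_SqStarE[OF n m(1)])
  have "int n = M * M" using n unfolding M_def by (simp add: power2_eq_square)
  note ij = ij[unfolded lower_seq_def, simplified] and zero = zero[unfolded this]
  define B where "B = {i..<j}"
  have "(\<Sum>q\<in>B. x q^2 * lower_seq M c ! q) = M * (\<Sum>q\<in>B. x q^2 * \<beta> q) + (\<Sum>q\<in>B. x q^2 * \<gamma> q)"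
    using ij unfolding B_def \<beta>_def \<gamma>_def
    by (simp add: lower_seq_nth sum_distrib_left sum.distrib[symmetric] algebra_simps)
  then have split: "M * M dvd M * (\<Sum>q\<in>B. x q^2 * \<beta> q) + (\<Sum>q\<in>B. x q^2 * \<gamma> q)"
    using zero unfolding B_def by simp
  then have "M dvd M * (\<Sum>q\<in>B. x q^2 * \<beta> q) + (\<Sum>q\<in>B. x q^2 * \<gamma> q)"
    by (rule dvd_mult_left)
  then have "M dvd (\<Sum>q\<in>B. x q^2 * \<gamma> q)" by (simp add: dvd_add_right_iff)
  then have "\<not> (2 \<in> B \<or> 5 \<in> B)"
    using two_point_sum_not_dvd[OF sqf nonresM, of B 2 5 x \<gamma>] units unfolding B_def \<gamma>_def by auto
  then have "(\<Sum>q\<in>B. x q^2 * \<gamma> q) = 0" unfolding \<gamma>_def by (intro sum.neutral) auto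
  then have \<beta>_dvd: "M dvd (\<Sum>q\<in>B. x q^2 * \<beta> q)" using split \<open>M \<noteq> 0\<close> by simp
  define t where "t = i div 3"
  have "2 \<notin> B" "5 \<notin> B" using \<open>\<not> (2 \<in> B \<or> 5 \<in> B)\<close> by auto
  then have "i = 3 * t \<or> i = 3 * t + 1" "j \<le> 3 * t + 2" using ij unfolding B_def t_def by auto presburger+
  then have "B \<subseteq> {3 * t, 3 * t + 1}" "i \<in> B \<inter> {3 * t, 3 * t + 1}" using ij unfolding B_def by auto
  with \<beta>_dvd show False
    using two_point_sum_not_dvd[OF sqf nonresM, of B "3 * t" "3 * t + 1" x \<beta>] units
    unfolding B_def \<beta>_def by auto
qed

lemma exists_length_8_without_consec_wzs:
  fixes m n :: nat
  assumes n: "n = m^2" and m: "m > 1" "odd m" "squarefree m"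
  shows "\<exists>ys. length ys = 8 \<and> set ys \<subseteq> Zn n \<and> \<not> has_consec_wzs n (SqStar n) ys"
proof -
  obtain c where c: "0 < c" "c < int m" "\<forall>p. prime p \<longrightarrow> p dvd int m \<longrightarrow> \<not> QuadRes p (-c)"
    using exists_nonres_neg_mod_prime_divisors[OF m(1,2)] by blast
  have "int m * c < int m * int m" using c(2) m(1) by simp
  moreover have "int m < int m * int m" using m(1) by simp
  moreover from this have "1 < int m * int m" "c < int m * int m" using c(2) m(1) by linarith+
  ultimately have "set (lower_seq (int m) c) \<subseteq> Zn n"
    using c(1) n unfolding lower_seq_def Zn_def by (auto simp: power2_eq_square)
  moreover have "\<not> has_consec_wzs n (SqStar n) (lower_seq (int m) c)"
    using lower_seq_no_consec_wzs[OF n _ m(3) c(3)] m(1) by simp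
  ultimately show ?thesis by (intro exI[of _ "lower_seq (int m) c"]) (simp add: lower_seq_def)
qed

theorem mainTheorem20:
  fixes m n :: nat
  assumes "n = m^2" and "m > 1" and "odd m" and "squarefree m"
  shows "C_const (SqStar n) n = 9"
  unfolding C_const_def
proof (rule Least_equality)
  show "0 < (9::nat) \<and> (\<forall>ys. length ys = 9 \<and> set ys \<subseteq> Zn n \<longrightarrow> has_consec_wzs n (SqStar n) ys)"
    using has_consec_wzs_of_length_9[OF assms(1-3)] by simp
next
  fix t :: nat
  assume t: "0 < t \<and> (\<forall>ys. length ys = t \<and> set ys \<subseteq> Zn n \<longrightarrow> has_consec_wzs n (SqStar n) ys)"
  obtain ys where ys: "length ys = 8" "set ys \<subseteq> Zn n" "\<not> has_consec_wzs n (SqStar n) ys"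
    using exists_length_8_without_consec_wzs[OF assms] by blast
  show "9 \<le> t"
  proof (rule ccontr)
    assume "\<not> 9 \<le> t"
    then have "length (take t ys) = t" "set (take t ys) \<subseteq> Zn n"
      using ys(1,2) set_take_subset[of t ys] by auto
    then have "has_consec_wzs n (SqStar n) (take t ys)" using t by blast
    then show False using ys(3) has_consec_wzs_take by blast
  qed
qed

end
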